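(* Let $K$ be an algebraically closed field of characteristic zero, $\mathcal{K} = K(t)$, $d \ge 2$, $f_d(z) = z^d + t$, $\alpha \in \mathcal{K}$, and $N \ge 1$. Then $v_\infty(\Phi_N(\alpha,t)) < 0$ and \[ h(\Phi_N(\alpha,t)) = D(N)\cdot \widehat{h}_{f_d}(\alpha). \] In particular, $\Phi_N(\alpha,t)$ vanishes at precisely $D(N)\cdot\widehat{h}_{f_d}(\alpha)$ finite places (places $\mathfrak{p}_c$, $c\in K$), counted with multiplicity.
   Context: The $N$th dynatomic polynomial of $f_d$ is $\Phi_N(z,t) := \prod_{n\mid N} (f_d^n(z) - z)^{\mu(N/n)} \in \mathbb{Z}[z,t]$ (a polynomial), where $\mu$ is the Möbius function, and $D(N) := \deg_z \Phi_N = \sum_{n\mid N}\mu(N/n)d^n$. Places of $\mathcal{K}$ are those trivial on $K$, corresponding to $c\in\mathbb{P}^1(K)$; $v_\infty(g) = \deg(\text{denominator}) - \deg(\text{numerator})$. The height $h$ of an element of $K(t)$ is its degree as a rational function, and $\widehat{h}_{f_d}(\alpha) := \lim_{n\to\infty} d^{-n} h(f_d^n(\alpha))$. *)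

theory Defs
  imports "HOL-Computational_Algebra.Computational_Algebra"
          "HOL-Computational_Algebra.Fraction_Field"
begin

definition moebius :: "nat \<Rightarrow> int" where
  "moebius n = (if squarefree n then (-1) ^ card (prime_factors n) else 0)"

(* The variable t of K(t), as an element of K[t] *)
definition tvar :: "'a::field poly" where "tvar = [:0, 1:]"

(* f_d^n(z) - z as a polynomial in z with coefficients in K[t] *)
definition iter_minus_z :: "nat \<Rightarrow> nat \<Rightarrow> 'a::field poly poly" where
  "iter_minus_z d n = ((\<lambda>p. p ^ d + [:tvar:]) ^^ n) [:0, 1:] - [:0, 1:]"

(* N-th dynatomic polynomial Phi_N(z,t) in (K[t])[z]:
   product of factors with mu = 1 divided (exactly) by product of factors with mu = -1 *)
definition dynatomic :: "nat \<Rightarrow> nat \<Rightarrow> 'a::field poly poly" where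
  "dynatomic d N =
     (\<Prod>n\<in>{n. n dvd N \<and> moebius (N div n) = 1}. iter_minus_z d n) div
     (\<Prod>n\<in>{n. n dvd N \<and> moebius (N div n) = -1}. iter_minus_z d n)"

(* D(N) = deg_z Phi_N *)
definition Ddeg :: "nat \<Rightarrow> nat \<Rightarrow> int" where
  "Ddeg d N = (\<Sum>n | n dvd N. moebius (N div n) * int d ^ n)"

type_synonym 'a ratfun = "'a poly fract"

definition tK :: "'a::field ratfun" where "tK = Fract tvar 1"

definition f_map :: "nat \<Rightarrow> 'a::field ratfun \<Rightarrow> 'a ratfun" where
  "f_map d z = z ^ d + tK"

definition dyn_eval :: "nat \<Rightarrow> nat \<Rightarrow> 'a::field ratfun \<Rightarrow> 'a ratfun" where
  "dyn_eval d N \<alpha> = poly (map_poly (\<lambda>c. Fract c 1) (dynatomic d N)) \<alpha>"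

definition rquot :: "'a::field ratfun \<Rightarrow> 'a poly \<times> 'a poly" where
  "rquot g = (SOME (p, q). q \<noteq> 0 \<and> lead_coeff q = 1 \<and> coprime p q \<and> g = Fract p q)"
definition rnum :: "'a::field ratfun \<Rightarrow> 'a poly" where "rnum g = fst (rquot g)"
definition rden :: "'a::field ratfun \<Rightarrow> 'a poly" where "rden g = snd (rquot g)"

definition ht :: "'a::field ratfun \<Rightarrow> nat" where
  "ht g = max (degree (rnum g)) (degree (rden g))"

definition v_inf :: "'a::field ratfun \<Rightarrow> int" where
  "v_inf g = int (degree (rden g)) - int (degree (rnum g))"

(* valuation at the finite place p_c (t = c), for g \<noteq> 0 *)
definition v_fin :: "'a::field \<Rightarrow> 'a ratfun \<Rightarrow> int" where
  "v_fin c g = int (order c (rnum g)) - int (order c (rden g))"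

definition canon_ht :: "nat \<Rightarrow> 'a::field ratfun \<Rightarrow> real" where
  "canon_ht d \<alpha> = lim (\<lambda>n. real (ht ((f_map d ^^ n) \<alpha>)) / real d ^ n)"

definition alg_closed :: "'a::field itself \<Rightarrow> bool" where
  "alg_closed _ \<longleftrightarrow> (\<forall>p::'a poly. 0 < degree p \<longrightarrow> (\<exists>x. poly p x = 0))"

end

theory Submission
  imports Defs
begin

text \<open>
  Write \<open>\<alpha> = p / q\<close> in lowest terms with \<open>q\<close> monic. Then \<open>f\<^sup>n(\<alpha>) = P\<^sub>n / q ^ d ^ n\<close> is again
  in lowest terms, so \<open>canon_ht d \<alpha>\<close> is \<open>deg p\<close> if \<open>\<alpha>\<close> has a pole at \<open>\<infinity>\<close> and \<open>deg q + 1 / d\<close>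
  otherwise. The numerators \<open>R\<^sub>n\<close> of \<open>f\<^sup>n(\<alpha>) - \<alpha>\<close> do not vanish at the roots of \<open>q\<close> and have
  degree exactly \<open>d ^ n \<cdot> canon_ht d \<alpha>\<close>. Since \<open>f\<^sup>n(z) - z\<close> is a strong divisibility sequence in
  the factorial ring \<open>K(t)[z]\<close>, the Moebius quotient \<open>\<Phi>\<^sub>N\<close> is exact, and
  \<open>\<Phi>\<^sub>N(\<alpha>, t) = (\<Prod> R\<^sub>n ^ \<mu>(N / n)) / q ^ D(N)\<close> in lowest terms. Its numerator has degree
  \<open>D(N) \<cdot> canon_ht d \<alpha> > D(N) \<cdot> deg q\<close>: there is a pole at \<open>\<infinity>\<close>, the height is that degree, and
  over an algebraically closed \<open>K\<close> the finite zeros counted with multiplicity are its roots.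
\<close>

section \<open>The Moebius function\<close>

lemma moebius_cases: "moebius n = 1 \<or> moebius n = -1 \<or> moebius n = 0"
  unfolding moebius_def by (auto simp: minus_one_power_iff)

lemma moebius_prime_mult:
  assumes "prime (p::nat)" "\<not> p dvd m" "m > 0"
  shows "moebius (p * m) = - moebius m"
proof -
  have "coprime p m" using assms by (simp add: prime_imp_coprime)
  then have "squarefree (p * m) \<longleftrightarrow> squarefree m"
    using assms(1) squarefree_mult_coprime squarefree_prime squarefree_mono[of m "p * m"] by auto
  moreover have "prime_factors (p * m) = insert p (prime_factors m)"
    using prime_factors_product[of p m] assms prime_prime_factors[of p] by (auto simp: prime_gt_0_nat)
  moreover have "p \<notin> prime_factors m" using assms(2) by auto
  ultimately show ?thesis unfolding moebius_def by simp
qed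

lemma sum_moebius_divisors:
  assumes "M > (0::nat)"
  shows "(\<Sum>m | m dvd M. moebius m) = (if M = 1 then 1 else 0)"
proof (cases "M = 1")
  case True
  then have "{m. m dvd M} = {1}" by auto
  with True show ?thesis by (simp add: moebius_def)
next
  case False
  then obtain p where p: "prime p" "p dvd M" using prime_factor_nat by blast
  define S0 where "S0 = {m. m dvd M \<and> \<not> p dvd m}"
  define S1 where "S1 = {m. m dvd M \<and> p dvd m \<and> \<not> p\<^sup>2 dvd m}"
  define S2 where "S2 = {m. m dvd M \<and> p\<^sup>2 dvd m}"
  have fin: "finite S0" "finite S1" "finite S2"
    using assms unfolding S0_def S1_def S2_def by auto
  have split: "{m. m dvd M} = S0 \<union> S1 \<union> S2" "S0 \<inter> S1 = {}" "(S0 \<union> S1) \<inter> S2 = {}"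
    unfolding S0_def S1_def S2_def by (auto simp: power2_eq_square)
  \<comment> \<open>divisors containing \<open>p\<close> exactly once are \<open>p\<close> times those avoiding it, with opposite sign\<close>
  have S1_eq: "S1 = (*) p ` S0"
  proof (intro equalityI subsetI)
    fix x assume "x \<in> (*) p ` S0"
    then obtain m where x: "x = p * m" and m: "m dvd M" "\<not> p dvd m" unfolding S0_def by auto
    have "p * m dvd M" using p m by (simp add: divides_mult prime_imp_coprime)
    moreover have "\<not> p\<^sup>2 dvd p * m" using m(2) p(1) by (auto simp: power2_eq_square prime_gt_0_nat)
    ultimately show "x \<in> S1" unfolding S1_def x by auto
  next
    fix x assume x: "x \<in> S1"
    then obtain m where m: "x = p * m" unfolding S1_def by auto
    with x p(1) have "m dvd M" "\<not> p dvd m"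
      unfolding S1_def by (auto simp: power2_eq_square intro: dvd_mult_right)
    then show "x \<in> (*) p ` S0" unfolding S0_def m by auto
  qed
  have "inj_on ((*) p) S0" using p(1) by (auto simp: inj_on_def prime_gt_0_nat)
  then have "sum moebius S1 = (\<Sum>m\<in>S0. moebius (p * m))"
    unfolding S1_eq by (simp add: sum.reindex)
  also have "\<dots> = (\<Sum>m\<in>S0. - moebius m)"
    using assms p(1) by (intro sum.cong) (auto simp: S0_def moebius_prime_mult intro: Nat.gr0I)
  also have "\<dots> = - sum moebius S0" by (simp add: sum_negf)
  finally have S1_sum: "sum moebius S1 = - sum moebius S0" .
  have "sum moebius S2 = 0"
    using p(1) by (intro sum.neutral) (auto simp: S2_def moebius_def dest: squarefreeD)
  with S1_sum show ?thesis
    using False fin split by (simp add: sum.union_disjoint)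
qed

lemma sum_moebius_cofactors:
  assumes "M > (0::nat)"
  shows "(\<Sum>j | j dvd M. moebius (M div j)) = (if M = 1 then 1 else 0)"
proof -
  have "(\<Sum>j | j dvd M. moebius (M div j)) = (\<Sum>m | m dvd M. moebius m)"
    by (rule sum.reindex_bij_witness[of _ "\<lambda>m. M div m" "\<lambda>m. M div m"])
      (use assms in auto)
  with sum_moebius_divisors[OF assms] show ?thesis by simp
qed

text \<open>
  A set of divisors of \<open>N\<close> closed under \<open>gcd\<close> and under passing to larger divisors consists of
  the multiples of its least element \<open>k\<close>, so its Moebius sum is \<open>\<Sum>j | j dvd N div k. \<mu>((N div k) div j)\<close>.
\<close>
lemma sum_moebius_divisor_upset_nonneg:
  fixes N :: nat
  assumes N: "N > 0" and T: "T \<subseteq> {n. n dvd N}"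
    and gcd_closed: "\<And>m n. m \<in> T \<Longrightarrow> n \<in> T \<Longrightarrow> gcd m n \<in> T"
    and up_closed: "\<And>m n. m \<in> T \<Longrightarrow> n dvd N \<Longrightarrow> m dvd n \<Longrightarrow> n \<in> T"
  shows "(\<Sum>n\<in>T. moebius (N div n)) \<ge> 0"
proof (cases "T = {}")
  case False
  have fin: "finite T" using N by (intro finite_subset[OF T]) simp
  define k where "k = Min T"
  have k: "k \<in> T" unfolding k_def using fin False by simp
  have pos: "n > 0" if "n \<in> T" for n using that T N by (auto intro: Nat.gr0I)
  have k_dvd: "k dvd n" if n: "n \<in> T" for n
  proof -
    have "gcd k n \<in> T" using gcd_closed k n by blast
    then have "k \<le> gcd k n" unfolding k_def using fin by simp
    with pos[OF k] have "gcd k n = k" by (simp add: gcd_le1_nat le_antisym)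
    then show ?thesis by (metis gcd_dvd2)
  qed
  obtain M where M: "N = k * M" using k T by (auto elim: dvdE)
  have "M > 0" using M N by simp
  have T_eq: "T = (*) k ` {j. j dvd M}"
  proof (intro equalityI subsetI)
    fix n assume n: "n \<in> T"
    then obtain j where j: "n = k * j" using k_dvd by (auto elim: dvdE)
    have "n dvd N" using n T by auto
    then have "j dvd M" using pos[OF k] unfolding M j by simp
    then show "n \<in> (*) k ` {j. j dvd M}" using j by auto
  next
    fix n assume "n \<in> (*) k ` {j. j dvd M}"
    then obtain j where "n = k * j" "j dvd M" by auto
    then show "n \<in> T" using up_closed[OF k] unfolding M by auto
  qed
  have "inj_on ((*) k) {j. j dvd M}" using pos[OF k] by (auto simp: inj_on_def)
  then have "(\<Sum>n\<in>T. moebius (N div n)) = (\<Sum>j | j dvd M. moebius (M div j))"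
    using pos[OF k] unfolding T_eq M by (simp add: sum.reindex div_mult2_eq)
  also have "\<dots> \<ge> 0" using sum_moebius_cofactors[OF \<open>M > 0\<close>] by simp
  finally show ?thesis .
qed simp

text \<open>
  Layer-cake decomposition: the weighted sum is the sum over \<open>j \<ge> 1\<close> of the Moebius sums over the
  superlevel sets \<open>{n. j \<le> e n}\<close>, each of which satisfies the previous lemma.
\<close>
lemma sum_moebius_weighted_nonneg:
  fixes N :: nat and e :: "nat \<Rightarrow> nat"
  assumes N: "N > 0"
    and mono: "\<And>m n. n dvd N \<Longrightarrow> m dvd n \<Longrightarrow> e m \<le> e n"
    and gcd: "\<And>m n. m dvd N \<Longrightarrow> n dvd N \<Longrightarrow> min (e m) (e n) \<le> e (gcd m n)"
  shows "(\<Sum>n | n dvd N. moebius (N div n) * int (e n)) \<ge> 0"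
proof -
  define S where "S = {n. n dvd N}"
  have fin: "finite S" unfolding S_def using N by simp
  define E where "E = (\<Sum>n\<in>S. e n)"
  have layers: "int (e n) = (\<Sum>j\<in>{1..E}. of_bool (j \<le> e n))" if "n \<in> S" for n
  proof -
    have "e n \<le> E" unfolding E_def using fin that by (intro member_le_sum) auto
    then have "{1..E} \<inter> {j. j \<le> e n} = {1..e n}" by auto
    then show ?thesis by (simp add: sum.If_cases)
  qed
  have "(\<Sum>n\<in>S. moebius (N div n) * int (e n))
      = (\<Sum>n\<in>S. \<Sum>j\<in>{1..E}. moebius (N div n) * of_bool (j \<le> e n))"
    by (intro sum.cong refl) (simp add: layers sum_distrib_left)
  also have "\<dots> = (\<Sum>j\<in>{1..E}. \<Sum>n\<in>S. moebius (N div n) * of_bool (j \<le> e n))"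
    by (rule sum.swap)
  also have "\<dots> = (\<Sum>j\<in>{1..E}. \<Sum>n\<in>{n\<in>S. j \<le> e n}. moebius (N div n))"
    using fin by (simp add: sum.inter_filter of_bool_def if_distrib cong: if_cong)
  also have "\<dots> \<ge> 0"
  proof (rule sum_nonneg)
    fix j
    show "(\<Sum>n\<in>{n\<in>S. j \<le> e n}. moebius (N div n)) \<ge> 0"
    proof (rule sum_moebius_divisor_upset_nonneg[OF N])
      fix m n assume "m \<in> {n\<in>S. j \<le> e n}" "n \<in> {n\<in>S. j \<le> e n}"
      then show "gcd m n \<in> {n\<in>S. j \<le> e n}"
        using gcd[of m n] by (auto simp: S_def intro: dvd_trans)
    next
      fix m n assume "m \<in> {n\<in>S. j \<le> e n}" "n dvd N" "m dvd n"
      then show "n \<in> {n\<in>S. j \<le> e n}" using mono[of n m] by (auto simp: S_def)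
    qed (auto simp: S_def)
  qed
  finally show ?thesis unfolding S_def .
qed

abbreviation mu_plus :: "nat \<Rightarrow> nat set" where
  "mu_plus N \<equiv> {n. n dvd N \<and> moebius (N div n) = 1}"

abbreviation mu_minus :: "nat \<Rightarrow> nat set" where
  "mu_minus N \<equiv> {n. n dvd N \<and> moebius (N div n) = -1}"

lemma sum_moebius_eq_diff:
  fixes g :: "nat \<Rightarrow> 'r::comm_ring_1"
  assumes "N > 0"
  shows "(\<Sum>n | n dvd N. of_int (moebius (N div n)) * g n) = sum g (mu_plus N) - sum g (mu_minus N)"
proof -
  have "of_int (moebius (N div n)) * g n
      = (if moebius (N div n) = 1 then g n else 0) - (if moebius (N div n) = -1 then g n else 0)" for n
    using moebius_cases[of "N div n"] by auto
  then have "(\<Sum>n | n dvd N. of_int (moebius (N div n)) * g n)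
      = (\<Sum>n | n dvd N. if moebius (N div n) = 1 then g n else 0)
      - (\<Sum>n | n dvd N. if moebius (N div n) = -1 then g n else 0)"
    by (simp add: sum_subtractf)
  also have "\<dots> = sum g (mu_plus N) - sum g (mu_minus N)"
    using assms by (simp add: sum.inter_filter[symmetric] Collect_conj_eq[symmetric])
  finally show ?thesis .
qed

section \<open>The degree \<open>D(N)\<close>\<close>

lemma sum_powers_less_power:
  assumes "(d::nat) \<ge> 2"
  shows "(\<Sum>i<m. d ^ i) < d ^ m"
proof (induction m)
  case (Suc m)
  have "(\<Sum>i<Suc m. d ^ i) < d ^ m + d ^ m" using Suc by simp
  also have "\<dots> \<le> d * d ^ m" using assms by (simp add: mult_2[symmetric] mult_right_mono)
  finally show ?case by simp
qed simp

definition Ddeg_quot :: "nat \<Rightarrow> nat \<Rightarrow> int" where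
  "Ddeg_quot d N = (\<Sum>n | n dvd N. moebius (N div n) * int d ^ (n - 1))"

lemma Ddeg_eq_mult_Ddeg_quot:
  assumes "N > 0"
  shows "Ddeg d N = int d * Ddeg_quot d N"
  unfolding Ddeg_def Ddeg_quot_def sum_distrib_left
proof (intro sum.cong refl)
  fix n assume "n \<in> {n. n dvd N}"
  then have "n > 0" using assms by (auto intro: Nat.gr0I)
  then have "int d ^ n = int d * int d ^ (n - 1)" by (cases n) auto
  then show "moebius (N div n) * int d ^ n = int d * (moebius (N div n) * int d ^ (n - 1))"
    by simp
qed

text \<open>The term \<open>d ^ (N - 1)\<close> of \<open>n = N\<close> dominates all the others together.\<close>
lemma Ddeg_quot_pos:
  assumes d: "d \<ge> 2" and N: "N > 0"
  shows "Ddeg_quot d N > 0"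
proof -
  define S where "S = {n. n dvd N} - {N}"
  have fin: "finite S" unfolding S_def using N by simp
  have S_sub: "S \<subseteq> {1..<N}"
    using N by (auto simp: S_def dvd_imp_le intro: Nat.gr0I)
  have "Ddeg_quot d N = int d ^ (N - 1) + (\<Sum>n\<in>S. moebius (N div n) * int d ^ (n - 1))"
    unfolding Ddeg_quot_def S_def using N by (subst sum.remove[of _ N]) (auto simp: moebius_def)
  moreover have "- (\<Sum>n\<in>S. int d ^ (n - 1)) \<le> (\<Sum>n\<in>S. moebius (N div n) * int d ^ (n - 1))"
    unfolding sum_negf[symmetric]
  proof (rule sum_mono)
    fix n
    have "\<bar>moebius (N div n)\<bar> \<le> 1" using moebius_cases[of "N div n"] by auto
    then have "\<bar>moebius (N div n) * int d ^ (n - 1)\<bar> \<le> int d ^ (n - 1)"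
      by (simp add: abs_mult mult_left_le_one_le)
    then show "- (int d ^ (n - 1)) \<le> moebius (N div n) * int d ^ (n - 1)" by linarith
  qed
  moreover have "(\<Sum>n\<in>S. int d ^ (n - 1)) \<le> (\<Sum>n\<in>{1..<N}. int d ^ (n - 1))"
    using S_sub by (intro sum_mono2) auto
  moreover have "(\<Sum>n\<in>{1..<N}. int d ^ (n - 1)) = int (\<Sum>i<N - 1. d ^ i)"
    unfolding of_nat_sum of_nat_power
    by (rule sum.reindex_bij_witness[of _ Suc "\<lambda>n. n - 1"]) auto
  moreover have "int (\<Sum>i<N - 1. d ^ i) < int d ^ (N - 1)"
    using sum_powers_less_power[OF d, of "N - 1"] by (metis of_nat_less_iff of_nat_power)
  ultimately show ?thesis by linarith
qed

lemma Ddeg_pos: "d \<ge> 2 \<Longrightarrow> N > 0 \<Longrightarrow> Ddeg d N > 0"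
  using Ddeg_eq_mult_Ddeg_quot Ddeg_quot_pos by simp

lemma two_le_power: "(d::nat) \<ge> 2 \<Longrightarrow> n \<ge> 1 \<Longrightarrow> d ^ n \<ge> 2"
  using self_le_power[of d n] by simp

section \<open>Iterating \<open>z ^ d + c\<close> over a commutative ring\<close>

definition unicrit :: "nat \<Rightarrow> 'b \<Rightarrow> 'b::comm_ring_1 poly \<Rightarrow> 'b poly" where
  "unicrit d c p = p ^ d + [:c:]"

definition period_poly :: "nat \<Rightarrow> 'b \<Rightarrow> nat \<Rightarrow> 'b::comm_ring_1 poly" where
  "period_poly d c n = (unicrit d c ^^ n) [:0, 1:] - [:0, 1:]"

lemma unicrit_iter_Suc: "(unicrit d c ^^ Suc n) p = (unicrit d c ^^ n) p ^ d + [:c:]"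
  by (simp add: unicrit_def)

lemma iter_minus_z_eq_period_poly: "iter_minus_z d n = period_poly d tvar n"
  unfolding iter_minus_z_def period_poly_def unicrit_def ..

lemma period_poly_0 [simp]: "period_poly d c 0 = 0"
  by (simp add: period_poly_def)

lemma diff_dvd_unicrit_iter_diff: "a - b dvd (unicrit d c ^^ k) a - (unicrit d c ^^ k) b"
proof (induction k)
  case (Suc k)
  let ?a = "(unicrit d c ^^ k) a" and ?b = "(unicrit d c ^^ k) b"
  have "?a - ?b dvd ?a ^ d - ?b ^ d" unfolding power_diff_sumr2[of ?a d ?b] by (rule dvd_triv_left)
  moreover have "(unicrit d c ^^ Suc k) a - (unicrit d c ^^ Suc k) b = ?a ^ d - ?b ^ d"
    by (simp add: unicrit_iter_Suc del: funpow.simps)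
  ultimately show ?case using dvd_trans[OF Suc.IH] by simp
qed simp

lemma period_poly_dvd_diff:
  assumes "m \<le> n"
  shows "period_poly d c m dvd period_poly d c n - period_poly d c (n - m)"
proof -
  let ?g = "unicrit d c" and ?z = "[:0, 1:]"
  have "(?g ^^ n) ?z = (?g ^^ (n - m)) ((?g ^^ m) ?z)"
    using funpow_add[of "n - m" m ?g] assms by simp
  then show ?thesis
    using diff_dvd_unicrit_iter_diff[of "(?g ^^ m) ?z" ?z "n - m" d c]
    by (simp add: period_poly_def)
qed

lemma period_poly_common_dvd_gcd:
  "x dvd period_poly d c m \<Longrightarrow> x dvd period_poly d c n \<Longrightarrow> x dvd period_poly d c (gcd m n)"
proof (induction "m + n" arbitrary: m n rule: less_induct)
  case less
  have reduce: "x dvd period_poly d c (b - a)"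
    if "a \<le> b" "x dvd period_poly d c a" "x dvd period_poly d c b" for a b
  proof -
    have "x dvd period_poly d c b - period_poly d c (b - a)"
      using period_poly_dvd_diff[OF that(1)] that(2) by (rule dvd_trans[rotated])
    with that(3) have "x dvd period_poly d c b - (period_poly d c b - period_poly d c (b - a))"
      by (rule dvd_diff)
    then show ?thesis by simp
  qed
  show ?case
  proof (cases "m = 0 \<or> n = 0")
    case nonzero: False
    show ?thesis
    proof (cases "m \<le> n")
      case True
      have "x dvd period_poly d c (gcd m (n - m))"
        using less.hyps[of m "n - m"] reduce[OF True less.prems] less.prems(1) nonzero True by simp
      moreover have "gcd m (n - m) = gcd m n" using gcd_add2[of m "n - m"] True by simp
      ultimately show ?thesis by simp
    next
      case False
      then have le: "n \<le> m" by simp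
      have "x dvd period_poly d c (gcd n (m - n))"
        using less.hyps[of n "m - n"] reduce[OF le less.prems(2,1)] less.prems(2) nonzero le by simp
      moreover have "gcd n (m - n) = gcd m n" using gcd_add2[of n "m - n"] le by (simp add: gcd.commute)
      ultimately show ?thesis by simp
    qed
  qed (use less.prems in auto)
qed

lemma period_poly_dvd_mult: "period_poly d c m dvd period_poly d c (k * m)"
proof (induction k)
  case (Suc k)
  have "period_poly d c m dvd period_poly d c (Suc k * m) - period_poly d c (k * m)"
    using period_poly_dvd_diff[of m "Suc k * m" d c] by simp
  from dvd_add[OF this Suc.IH] show ?case by simp
qed simp

lemma period_poly_dvd:
  assumes "m dvd n"
  shows "period_poly d c m dvd period_poly d c n"
proof -
  obtain k where "n = m * k" using assms by (rule dvdE)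
  then show ?thesis using period_poly_dvd_mult[of d c m k] by (simp only: mult.commute)
qed

lemma degree_lead_coeff_add_lower:
  "degree q < degree p \<Longrightarrow> degree (p + q) = degree p \<and> lead_coeff (p + q) = lead_coeff p"
  using degree_add_eq_left[of q p] lead_coeff_add_le[of q p] by (simp add: add.commute)

lemma degree_lead_coeff_diff_lower:
  fixes p q :: "'b::comm_ring poly"
  shows "degree q < degree p \<Longrightarrow> degree (p - q) = degree p \<and> lead_coeff (p - q) = lead_coeff p"
  using degree_lead_coeff_add_lower[of "- q" p] by (simp add: coeff_eq_0)

lemma degree_lead_coeff_unicrit_iter:
  fixes c :: "'b::idom"
  assumes "d \<ge> 2"
  shows "degree ((unicrit d c ^^ n) [:0, 1:]) = d ^ n \<and> lead_coeff ((unicrit d c ^^ n) [:0, 1:]) = 1"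
proof (induction n)
  case (Suc n)
  let ?p = "(unicrit d c ^^ n) [:0, 1:]"
  have p: "degree ?p = d ^ n" "lead_coeff ?p = 1" using Suc by auto
  then have "?p \<noteq> 0" by auto
  then have deg: "degree (?p ^ d) = d ^ Suc n" using p by (simp add: degree_power_eq)
  have lc: "lead_coeff (?p ^ d) = 1" using p by (simp only: lead_coeff_power power_one)
  have "degree [:c:] < degree (?p ^ d)" using deg assms by simp
  then have "degree (?p ^ d + [:c:]) = d ^ Suc n \<and> lead_coeff (?p ^ d + [:c:]) = 1"
    using degree_lead_coeff_add_lower[of "[:c:]" "?p ^ d"] deg lc by metis
  then show ?case unfolding unicrit_iter_Suc .
qed simp

lemma
  fixes c :: "'b::idom"
  assumes "d \<ge> 2" "n \<ge> 1"
  shows degree_period_poly: "degree (period_poly d c n) = d ^ n"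
    and lead_coeff_period_poly: "lead_coeff (period_poly d c n) = 1"
proof -
  let ?p = "(unicrit d c ^^ n) [:0, 1:]"
  have p: "degree ?p = d ^ n" "lead_coeff ?p = 1"
    using degree_lead_coeff_unicrit_iter[OF assms(1)] by auto
  have "degree [:0, 1::'b:] < degree ?p" using p(1) two_le_power[OF assms] by simp
  with p show "degree (period_poly d c n) = d ^ n" "lead_coeff (period_poly d c n) = 1"
    using degree_lead_coeff_diff_lower[of "[:0, 1:]" ?p] by (simp_all add: period_poly_def coeff_eq_0)
qed

lemma period_poly_nonzero:
  fixes c :: "'b::idom"
  assumes "d \<ge> 2" "n \<ge> 1"
  shows "period_poly d c n \<noteq> 0"
  using lead_coeff_period_poly[OF assms, of c] by auto

section \<open>Moebius quotients of strong divisibility sequences\<close>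

text \<open>
  Compare multiplicities at each prime \<open>P\<close>: the weights \<open>n \<mapsto> multiplicity P (F n)\<close> are monotone
  along divisibility and satisfy the \<open>gcd\<close> condition of \<open>sum_moebius_weighted_nonneg\<close>.
\<close>
lemma prod_mu_minus_dvd_prod_mu_plus:
  fixes F :: "nat \<Rightarrow> 'c::factorial_semiring"
  assumes N: "N > 0" and nz: "\<And>n. n dvd N \<Longrightarrow> F n \<noteq> 0"
    and mono: "\<And>m n. m dvd n \<Longrightarrow> F m dvd F n"
    and gcd: "\<And>x m n. x dvd F m \<Longrightarrow> x dvd F n \<Longrightarrow> x dvd F (gcd m n)"
  shows "prod F (mu_minus N) dvd prod F (mu_plus N)"
proof (rule multiplicity_le_imp_dvd)
  show "prod F (mu_minus N) \<noteq> 0" using N nz by auto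
next
  fix P :: 'c assume "prime P"
  then have P: "prime_elem P" "\<not> is_unit P" by (simp_all add: prime_imp_prime_elem prime_elem_not_unit)
  define e where "e n = multiplicity P (F n)" for n
  have mult_prod: "multiplicity P (prod F (mu_plus N)) = sum e (mu_plus N)"
    "multiplicity P (prod F (mu_minus N)) = sum e (mu_minus N)"
    using N nz unfolding e_def by (auto intro!: prime_elem_multiplicity_prod_distrib[OF P(1)])
  have pow_dvd: "P ^ j dvd F n \<longleftrightarrow> j \<le> e n" if "n dvd N" for j n
    unfolding e_def using nz[OF that] P(2) by (rule power_dvd_iff_le_multiplicity)
  have "(\<Sum>n | n dvd N. moebius (N div n) * int (e n)) \<ge> 0"
  proof (rule sum_moebius_weighted_nonneg[OF N])
    fix m n assume "n dvd N" "m dvd n"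
    then show "e m \<le> e n" unfolding e_def using mono nz by (intro dvd_imp_multiplicity_le) auto
  next
    fix m n assume mn: "m dvd N" "n dvd N"
    have "P ^ min (e m) (e n) dvd F (gcd m n)"
      using mn by (intro gcd) (simp_all add: pow_dvd)
    then show "min (e m) (e n) \<le> e (gcd m n)"
      using pow_dvd[of "gcd m n"] mn by (meson dvd_trans gcd_dvd1)
  qed
  then have "int (sum e (mu_minus N)) \<le> int (sum e (mu_plus N))"
    using sum_moebius_eq_diff[OF N, of "\<lambda>n. int (e n)"] by simp
  then show "multiplicity P (prod F (mu_minus N)) \<le> multiplicity P (prod F (mu_plus N))"
    unfolding mult_prod of_nat_le_iff[symmetric, where 'a=int] of_nat_sum by simp
qed

section \<open>The dynatomic polynomial as an exact quotient\<close>

text \<open>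
  Like any field, a fraction field is trivially a Euclidean ring; this makes \<open>K(t)[z]\<close> a
  factorial ring, where the Moebius product can be divided out.
\<close>
instantiation fract ::
  (idom) "{unique_euclidean_ring, normalization_euclidean_semiring, normalization_semidom_multiplicative}"
begin

definition normalize_fract :: "'a fract \<Rightarrow> 'a fract" where
  [simp]: "normalize_fract x = (if x = 0 then 0 else 1)"

definition unit_factor_fract :: "'a fract \<Rightarrow> 'a fract" where
  [simp]: "unit_factor_fract x = x"

definition modulo_fract :: "'a fract \<Rightarrow> 'a fract \<Rightarrow> 'a fract" where
  [simp]: "modulo_fract x y = (if y = 0 then x else 0)"

definition euclidean_size_fract :: "'a fract \<Rightarrow> nat" where
  [simp]: "euclidean_size_fract x = (if x = 0 then 0 else 1)"

definition division_segment_fract :: "'a fract \<Rightarrow> 'a fract" where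
  [simp]: "division_segment_fract x = 1"

instance
  by standard (simp_all add: dvd_field_iff field_split_simps split: if_splits)

end

instantiation fract :: (idom) euclidean_ring_gcd
begin

definition gcd_fract :: "'a fract \<Rightarrow> 'a fract \<Rightarrow> 'a fract" where
  "gcd_fract = Euclidean_Algorithm.gcd"

definition lcm_fract :: "'a fract \<Rightarrow> 'a fract \<Rightarrow> 'a fract" where
  "lcm_fract = Euclidean_Algorithm.lcm"

definition Gcd_fract :: "'a fract set \<Rightarrow> 'a fract" where
  "Gcd_fract = Euclidean_Algorithm.Gcd"

definition Lcm_fract :: "'a fract set \<Rightarrow> 'a fract" where
  "Lcm_fract = Euclidean_Algorithm.Lcm"

instance
  by standard (simp_all add: gcd_fract_def lcm_fract_def Gcd_fract_def Lcm_fract_def)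

end

instance fract :: (idom) field_gcd ..

lemma fract_poly_power: "fract_poly (p ^ n) = fract_poly p ^ n"
  by (induction n) simp_all

lemma fract_poly_prod: "fract_poly (\<Prod>n\<in>S. f n) = (\<Prod>n\<in>S. fract_poly (f n))"
  by (induction S rule: infinite_finite_induct) simp_all

lemma fract_poly_const: "fract_poly [:c:] = [:to_fract c:]"
  by (simp add: map_poly_pCons)

lemma fract_poly_period_poly: "fract_poly (period_poly d c n) = period_poly d (to_fract c) n"
proof -
  have "fract_poly ((unicrit d c ^^ n) [:0, 1:]) = (unicrit d (to_fract c) ^^ n) [:0, 1:]"
    by (induction n) (simp_all add: unicrit_iter_Suc fract_poly_power fract_poly_const map_poly_pCons
        del: funpow.simps)
  then show ?thesis by (simp add: period_poly_def map_poly_pCons)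
qed

text \<open>Pseudo-division by a monic polynomial does not leave the coefficient ring.\<close>
lemma fract_poly_dvd_imp_dvd_monic:
  fixes A B :: "'b::idom poly"
  assumes monic: "lead_coeff B = 1" and dvd: "fract_poly B dvd fract_poly A"
  shows "B dvd A"
proof -
  have B: "B \<noteq> 0" using monic by auto
  define r where "r = pseudo_mod A B"
  obtain a q where aq: "a \<noteq> 0" "smult a A = B * q + r"
    using pseudo_mod(1)[OF B] unfolding r_def by blast
  have r_deg: "r = 0 \<or> degree r < degree B" using pseudo_mod(2)[OF B] unfolding r_def by blast
  have "fract_poly r = smult (to_fract a) (fract_poly A) - fract_poly B * fract_poly q"
    using arg_cong[OF aq(2), of fract_poly] by (simp add: algebra_simps)
  then have "fract_poly B dvd fract_poly r" using dvd by (simp add: dvd_smult)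
  have "r = 0"
  proof (rule ccontr)
    assume "r \<noteq> 0"
    with \<open>fract_poly B dvd fract_poly r\<close> have "degree B \<le> degree r"
      using dvd_imp_degree_le[of "fract_poly B" "fract_poly r"] by (simp add: degree_map_poly)
    with r_deg \<open>r \<noteq> 0\<close> show False by simp
  qed
  with aq have "B dvd smult a A" by simp
  then show ?thesis using dvd_monic[OF monic _ aq(1)] by blast
qed

lemma tK_eq_to_fract: "tK = to_fract tvar"
  by (simp add: tK_def to_fract_def)

lemma f_map_iter_Suc: "(f_map d ^^ Suc n) \<alpha> = (f_map d ^^ n) \<alpha> ^ d + tK"
  by (simp add: f_map_def)

lemma poly_period_poly_tK: "poly (period_poly d tK n) \<alpha> = (f_map d ^^ n) \<alpha> - \<alpha>"
proof -
  have "poly ((unicrit d tK ^^ n) [:0, 1:]) \<alpha> = (f_map d ^^ n) \<alpha>"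
    by (induction n) (simp_all add: unicrit_iter_Suc f_map_iter_Suc del: funpow.simps)
  then show ?thesis by (simp add: period_poly_def)
qed

lemma dyn_eval_eq_poly: "dyn_eval d N \<alpha> = poly (fract_poly (dynatomic d N)) \<alpha>"
  by (simp add: dyn_eval_def to_fract_def[abs_def])

lemma dynatomic_mult_prod_mu_minus:
  assumes d: "d \<ge> 2" and N: "N > 0"
  shows "dynatomic d N * prod (iter_minus_z d) (mu_minus N) = prod (iter_minus_z d) (mu_plus N)"
proof -
  have pos: "n \<ge> 1" if "n dvd N" for n using that N by (auto intro: Nat.gr0I)
  have fract_poly_prod_iter: "fract_poly (prod (iter_minus_z d) S) = prod (period_poly d tK) S" for S
    by (simp add: fract_poly_prod iter_minus_z_eq_period_poly fract_poly_period_poly tK_eq_to_fract)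
  have dvd: "prod (period_poly d tK) (mu_minus N) dvd prod (period_poly d tK) (mu_plus N)"
  proof (rule prod_mu_minus_dvd_prod_mu_plus[OF N])
    fix n assume "n dvd N"
    then show "period_poly d tK n \<noteq> 0" using period_poly_nonzero[OF d pos] by blast
  qed (auto intro: period_poly_dvd period_poly_common_dvd_gcd)
  have monic: "lead_coeff (prod (iter_minus_z d) (mu_minus N)) = 1"
    unfolding lead_coeff_prod iter_minus_z_eq_period_poly
  proof (intro prod.neutral ballI)
    fix n assume "n \<in> mu_minus N"
    then have "n dvd N" by simp
    then show "lead_coeff (period_poly d tvar n) = 1" by (rule lead_coeff_period_poly[OF d pos])
  qed
  have "prod (iter_minus_z d) (mu_minus N) dvd prod (iter_minus_z d) (mu_plus N)"
    using dvd unfolding fract_poly_prod_iter[symmetric] by (rule fract_poly_dvd_imp_dvd_monic[OF monic])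
  then show ?thesis unfolding dynatomic_def by (rule dvd_div_mult_self)
qed

lemma dyn_eval_mult_prod_mu_minus:
  assumes "d \<ge> 2" "N > 0"
  shows "dyn_eval d N \<alpha> * (\<Prod>n\<in>mu_minus N. (f_map d ^^ n) \<alpha> - \<alpha>)
       = (\<Prod>n\<in>mu_plus N. (f_map d ^^ n) \<alpha> - \<alpha>)"
proof -
  have eval_prod: "poly (fract_poly (prod (iter_minus_z d) S)) \<alpha> = (\<Prod>n\<in>S. (f_map d ^^ n) \<alpha> - \<alpha>)" for S
    by (simp add: fract_poly_prod poly_prod iter_minus_z_eq_period_poly fract_poly_period_poly
        tK_eq_to_fract[symmetric] poly_period_poly_tK)
  from arg_cong[OF dynatomic_mult_prod_mu_minus[OF assms], of "\<lambda>p. poly (fract_poly p) \<alpha>"]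
  show ?thesis by (simp only: fract_poly_mult poly_mult eval_prod dyn_eval_eq_poly)
qed

section \<open>Polynomials over an algebraically closed field\<close>

lemma alg_closed_has_root:
  assumes "alg_closed TYPE('a::field)" "degree (p::'a poly) > 0"
  shows "\<exists>c. poly p c = 0"
  using assms unfolding alg_closed_def by blast

lemma coprime_imp_no_common_root:
  fixes p q :: "'a::field poly"
  assumes "coprime p q" "poly p c = 0"
  shows "poly q c \<noteq> 0"
proof
  assume "poly q c = 0"
  with assms have "is_unit [:-c, 1:]" by (simp add: poly_eq_0_iff_dvd coprime_common_divisor)
  then show False by (simp add: is_unit_iff_degree)
qed

lemma coprime_if_no_common_root:
  fixes p q :: "'a::field poly"
  assumes ac: "alg_closed TYPE('a)" and "q \<noteq> 0" and no_common: "\<And>c. poly q c = 0 \<Longrightarrow> poly p c \<noteq> 0"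
  shows "coprime p q"
proof (rule coprimeI)
  fix x assume x: "x dvd p" "x dvd q"
  then have "x \<noteq> 0" using \<open>q \<noteq> 0\<close> by auto
  show "is_unit x"
  proof (rule ccontr)
    assume "\<not> is_unit x"
    with \<open>x \<noteq> 0\<close> obtain c where "poly x c = 0"
      using alg_closed_has_root[OF ac] by (auto simp: is_unit_iff_degree)
    with x have "poly p c = 0" "poly q c = 0" by (auto elim!: dvdE)
    with no_common show False by blast
  qed
qed

lemma dvd_if_order_le:
  fixes q r :: "'a::field poly"
  assumes ac: "alg_closed TYPE('a)"
  shows "q \<noteq> 0 \<Longrightarrow> r \<noteq> 0 \<Longrightarrow> (\<And>c. order c q \<le> order c r) \<Longrightarrow> q dvd r"
proof (induction "degree q" arbitrary: q r rule: less_induct)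
  case less
  show ?case
  proof (cases "degree q = 0")
    case True
    with less.prems(1) show ?thesis by (simp add: is_unit_iff_degree unit_imp_dvd)
  next
    case False
    then obtain c where "poly q c = 0" using alg_closed_has_root[OF ac] by blast
    then obtain q' where q: "q = [:-c, 1:] * q'" by (auto simp: poly_eq_0_iff_dvd elim: dvdE)
    have "order c r > 0"
      using less.prems(1) less.prems(3)[of c] \<open>poly q c = 0\<close> order_gt_0_iff[of q c] by linarith
    then obtain r' where r: "r = [:-c, 1:] * r'"
      using less.prems(2) by (auto simp: order_gt_0_iff poly_eq_0_iff_dvd elim: dvdE)
    have nz: "q' \<noteq> 0" "r' \<noteq> 0" using q r less.prems by auto
    have "degree q' < degree q" using nz degree_mult_eq[of "[:-c, 1:]" q'] unfolding q by simp
    moreover have "order x q' \<le> order x r'" for x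
    proof -
      have "order x q = order x [:-c, 1:] + order x q'" using less.prems(1) unfolding q by (rule order_mult)
      moreover have "order x r = order x [:-c, 1:] + order x r'" using less.prems(2) unfolding r by (rule order_mult)
      ultimately show ?thesis using less.prems(3)[of x] by linarith
    qed
    ultimately have "q' dvd r'" using less.hyps nz by blast
    then show ?thesis unfolding q r by (rule mult_dvd_mono[OF dvd_refl])
  qed
qed

lemma coprime_dvd_mult_cancel:
  fixes u v s :: "'a::field poly"
  assumes ac: "alg_closed TYPE('a)" and "coprime v s" and dvd: "v dvd u * s"
  shows "v dvd u"
proof (cases "u = 0 \<or> s = 0")
  case True
  then show ?thesis
  proof
    assume "s = 0"
    then have "is_unit v" using \<open>coprime v s\<close> by simp
    then show ?thesis by (rule unit_imp_dvd)
  qed simp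
next
  case False
  then have "v \<noteq> 0" using dvd by auto
  show ?thesis
  proof (rule dvd_if_order_le[OF ac \<open>v \<noteq> 0\<close>])
    fix c
    have "order c v \<le> order c u + order c s"
      using dvd_imp_order_le[OF _ dvd] False by (simp add: order_mult)
    moreover have "order c s = 0" if "order c v > 0"
      using that \<open>v \<noteq> 0\<close> coprime_imp_no_common_root[OF \<open>coprime v s\<close>]
      by (simp add: order_gt_0_iff order_0I)
    ultimately show "order c v \<le> order c u" by fastforce
  qed (use False in simp)
qed

lemma sum_order_roots_eq_degree:
  fixes p :: "'a::field poly"
  assumes ac: "alg_closed TYPE('a)" and "p \<noteq> 0"
  shows "(\<Sum>c | poly p c = 0. order c p) = degree p"
proof -
  have "size (proots p) = degree p" using \<open>p \<noteq> 0\<close>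
  proof (induction "degree p" arbitrary: p rule: less_induct)
    case less
    show ?case
    proof (cases "degree p = 0")
      case True
      then show ?thesis by (auto elim: degree_eq_zeroE)
    next
      case False
      then obtain c where "poly p c = 0" using alg_closed_has_root[OF ac] by blast
      then obtain r where p: "p = [:-c, 1:] * r" by (auto simp: poly_eq_0_iff_dvd elim: dvdE)
      with less.prems have "r \<noteq> 0" by auto
      then have "degree r < degree p" using degree_mult_eq[of "[:-c, 1:]" r] unfolding p by simp
      with less.hyps \<open>r \<noteq> 0\<close> have "size (proots r) = degree r" by blast
      with \<open>r \<noteq> 0\<close> show ?thesis
        using degree_mult_eq[of "[:-c, 1:]" r] proots_mult[of "[:-c, 1:]" r] unfolding p by simp
    qed
  qed
  then show ?thesis
    using \<open>p \<noteq> 0\<close> by (simp add: size_multiset_overloaded_eq)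
qed

section \<open>Reduced representation of rational functions\<close>

lemma monic_dvd_antisym:
  fixes q r :: "'a::field poly"
  assumes "lead_coeff q = 1" "lead_coeff r = 1" "q dvd r" "r dvd q"
  shows "q = r"
proof -
  obtain k where k: "r = q * k" using assms(3) by (rule dvdE)
  have "q \<noteq> 0" "r \<noteq> 0" using assms(1,2) by auto
  then have "degree r = degree q" using assms(3,4) by (simp add: dvd_imp_degree_le le_antisym)
  then have "degree k = 0" using k \<open>r \<noteq> 0\<close> by (simp add: degree_mult_eq)
  then obtain a where "k = [:a:]" by (rule degree_eq_zeroE)
  moreover have "lead_coeff k = 1" using assms(1,2) k by (simp add: lead_coeff_mult)
  ultimately show ?thesis using k by simp
qed

text \<open>Common roots of numerator and denominator are cancelled one linear factor at a time.\<close>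
lemma reduced_fraction_exists:
  assumes ac: "alg_closed TYPE('a::field)"
  shows "\<exists>p q. q \<noteq> 0 \<and> lead_coeff q = 1 \<and> coprime p q \<and> (g::'a ratfun) = Fract p q"
proof -
  obtain a b where g: "g = Fract a b" "b \<noteq> 0" by (cases g) auto
  have "\<exists>p q. q \<noteq> 0 \<and> lead_coeff q = 1 \<and> coprime p q \<and> Fract a b = Fract p q" if "b \<noteq> 0"
    using that
  proof (induction "degree b" arbitrary: a b rule: less_induct)
    case less
    show ?case
    proof (cases "\<exists>c. poly a c = 0 \<and> poly b c = 0")
      case True
      then obtain c a' b' where ab: "a = [:-c, 1:] * a'" "b = [:-c, 1:] * b'"
        by (auto simp: poly_eq_0_iff_dvd elim!: dvdE)
      with less.prems have "b' \<noteq> 0" by auto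
      then have "degree b' < degree b" using degree_mult_eq[of "[:-c, 1:]" b'] unfolding ab by simp
      moreover have "Fract a b = Fract a' b'" unfolding ab by (rule mult_fract_cancel) simp
      moreover note less.hyps[OF _ \<open>b' \<noteq> 0\<close>, of a']
      ultimately show ?thesis by simp
    next
      case False
      define l where "l = inverse (lead_coeff b)"
      have "l \<noteq> 0" using less.prems by (simp add: l_def)
      have "coprime (smult l a) (smult l b)"
        using False less.prems \<open>l \<noteq> 0\<close> by (intro coprime_if_no_common_root[OF ac]) auto
      moreover have "Fract a b = Fract (smult l a) (smult l b)"
        using mult_fract_cancel[of "[:l:]" a b] \<open>l \<noteq> 0\<close> by simp
      ultimately show ?thesis using less.prems \<open>l \<noteq> 0\<close> by (intro exI[of _ "smult l a"] exI[of _ "smult l b"]) (simp add: l_def)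
    qed
  qed
  with g show ?thesis by blast
qed

lemma rnum_rden:
  assumes "alg_closed TYPE('a::field)"
  shows "rden g \<noteq> 0 \<and> lead_coeff (rden g) = 1 \<and> coprime (rnum g) (rden g) \<and> (g::'a ratfun) = Fract (rnum g) (rden g)"
proof -
  have "\<exists>x. case x of (p, q) \<Rightarrow> q \<noteq> 0 \<and> lead_coeff q = 1 \<and> coprime p q \<and> g = Fract p q"
    using reduced_fraction_exists[OF assms, of g] by auto
  from someI_ex[OF this] show ?thesis
    unfolding rnum_def rden_def rquot_def by (cases "rquot g") (auto simp: rquot_def)
qed

lemma rnum_rden_unique:
  assumes ac: "alg_closed TYPE('a::field)"
    and q: "q \<noteq> 0" "lead_coeff q = 1" and "coprime p q" and g: "(g::'a ratfun) = Fract p q"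
  shows "rnum g = p \<and> rden g = q"
proof -
  obtain r: "rden g \<noteq> 0" "lead_coeff (rden g) = 1" "coprime (rnum g) (rden g)"
    and g': "g = Fract (rnum g) (rden g)"
    using rnum_rden[OF ac, of g] by blast
  have eq: "p * rden g = rnum g * q" using g g' q(1) r(1) eq_fract(1) by metis
  have "q dvd rden g * p" using eq by (simp add: mult.commute)
  then have "q dvd rden g"
    using \<open>coprime p q\<close> coprime_dvd_mult_cancel[OF ac] coprime_commute by blast
  moreover have "rden g dvd q * rnum g" using eq by (metis dvd_triv_right mult.commute)
  then have "rden g dvd q"
    using r(3) coprime_dvd_mult_cancel[OF ac] coprime_commute by blast
  ultimately have "rden g = q" using q(2) r(2) by (intro monic_dvd_antisym)
  with eq q(1) show ?thesis by simp
qed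

lemma pole_at_infinity_valuations:
  fixes g :: "'a::field ratfun"
  assumes ac: "alg_closed TYPE('a)" and deg: "degree (rden g) < degree (rnum g)"
  shows "g \<noteq> 0 \<and> v_inf g < 0 \<and> ht g = degree (rnum g)
       \<and> (\<Sum>c | v_fin c g > 0. v_fin c g) = int (degree (rnum g))"
proof -
  define W Q where "W = rnum g" and "Q = rden g"
  have Q: "Q \<noteq> 0" "coprime W Q" and g: "g = Fract W Q"
    using rnum_rden[OF ac, of g] unfolding W_def Q_def by blast+
  have "W \<noteq> 0" using deg unfolding W_def[symmetric] Q_def[symmetric] by auto
  have "g \<noteq> 0"
  proof
    assume "g = 0"
    then have "Fract W Q = Fract 0 1" by (simp add: g fract_collapse)
    with Q(1) have "W * 1 = 0 * Q" by (simp add: eq_fract(1))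
    with \<open>W \<noteq> 0\<close> show False by simp
  qed
  have order_Q: "order c Q = 0" if "poly W c = 0" for c
    using coprime_imp_no_common_root[OF Q(2) that] by (rule order_0I)
  have "v_fin c g > 0 \<longleftrightarrow> poly W c = 0" for c
  proof
    assume "v_fin c g > 0"
    then have "order c W > 0" by (simp add: v_fin_def W_def[symmetric] Q_def[symmetric])
    with \<open>W \<noteq> 0\<close> show "poly W c = 0" by (simp add: order_gt_0_iff)
  next
    assume "poly W c = 0"
    with \<open>W \<noteq> 0\<close> order_Q[OF this] show "v_fin c g > 0"
      by (simp add: v_fin_def W_def[symmetric] Q_def[symmetric] order_gt_0_iff)
  qed
  then have "{c. v_fin c g > 0} = {c. poly W c = 0}" by blast
  then have "(\<Sum>c | v_fin c g > 0. v_fin c g) = (\<Sum>c | poly W c = 0. int (order c W))"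
    using order_Q by (simp add: v_fin_def W_def[symmetric] Q_def[symmetric])
  also have "\<dots> = int (degree W)"
    using sum_order_roots_eq_degree[OF ac \<open>W \<noteq> 0\<close>] by (simp flip: of_nat_sum)
  finally show ?thesis
    using \<open>g \<noteq> 0\<close> deg by (simp add: v_inf_def ht_def W_def[symmetric] Q_def[symmetric])
qed

section \<open>Iterates of a rational function under \<open>z ^ d + t\<close>\<close>

text \<open>Numerator of \<open>f\<^sup>n(p / q)\<close> over the denominator \<open>q ^ d ^ n\<close>.\<close>
primrec iter_num :: "nat \<Rightarrow> 'a::field poly \<Rightarrow> 'a poly \<Rightarrow> nat \<Rightarrow> 'a poly" where
  "iter_num d p q 0 = p"
| "iter_num d p q (Suc n) = iter_num d p q n ^ d + tvar * q ^ d ^ Suc n"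

lemma Fract_power: "Fract a b ^ n = Fract (a ^ n) (b ^ n)"
  by (induction n) (simp_all add: fract_collapse)

lemma poly_fract_poly_Fract:
  fixes \<Phi> :: "'b::idom poly"
  assumes "q \<noteq> 0" "degree \<Phi> \<le> E"
  shows "\<exists>W. poly (fract_poly \<Phi>) (Fract p q) = Fract W (q ^ E)"
  using assms(2)
proof (induction \<Phi> arbitrary: E)
  case 0
  show ?case by (rule exI[of _ 0]) (simp add: fract_collapse)
next
  case (pCons c \<Phi>)
  show ?case
  proof (cases "\<Phi> = 0")
    case True
    then have "poly (fract_poly (pCons c \<Phi>)) (Fract p q) = Fract (c * q ^ E) (q ^ E)"
      using assms(1) by (simp add: fract_poly_const to_fract_def eq_fract)
    then show ?thesis by blast
  next
    case False
    with pCons.prems obtain E' where E: "E = Suc E'" "degree \<Phi> \<le> E'" by (cases E) auto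
    with pCons.IH obtain W where W: "poly (fract_poly \<Phi>) (Fract p q) = Fract W (q ^ E')" by blast
    have "fract_poly (pCons c \<Phi>) = pCons (to_fract c) (fract_poly \<Phi>)" by (simp add: map_poly_pCons)
    then have "poly (fract_poly (pCons c \<Phi>)) (Fract p q) = Fract c 1 + Fract p q * Fract W (q ^ E')"
      by (simp add: W to_fract_def)
    also have "\<dots> = Fract (c * q ^ E + p * W) (q ^ E)"
      using assms(1) by (simp add: E algebra_simps)
    finally have "poly (fract_poly (pCons c \<Phi>)) (Fract p q) = Fract (c * q ^ E + p * W) (q ^ E)" .
    then show ?thesis by blast
  qed
qed

lemma f_map_iter_Fract:
  assumes "q \<noteq> 0"
  shows "(f_map d ^^ n) (Fract p q) = Fract (iter_num d p q n) (q ^ d ^ n)"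
proof (induction n)
  case (Suc n)
  have "q ^ d ^ n \<noteq> 0" using assms by simp
  with Suc show ?case
    by (simp add: f_map_iter_Suc tK_def Fract_power power_mult[symmetric] mult.commute del: funpow.simps)
qed simp

lemma poly_iter_num_neq_0:
  assumes "poly p c \<noteq> 0" "poly q c = 0" "d \<ge> 1"
  shows "poly (iter_num d p q n) c \<noteq> 0"
  using assms by (induction n) (simp_all add: zero_power)

lemma degree_tvar_mult_power:
  fixes q :: "'a::field poly"
  assumes "q \<noteq> 0"
  shows "degree (tvar * q ^ k) = 1 + k * degree q"
  using assms by (simp add: tvar_def degree_mult_eq degree_power_eq)

lemma degree_iter_num_pole:
  fixes p q :: "'a::field poly"
  assumes q: "q \<noteq> 0" and deg: "degree q < degree p" and d: "d \<ge> 2"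
  shows "degree (iter_num d p q n) = degree p * d ^ n"
proof (induction n)
  case (Suc n)
  define k where "k = d ^ Suc n"
  have "k \<ge> 2" unfolding k_def using two_le_power[OF d, of "Suc n"] by simp
  have "iter_num d p q n \<noteq> 0" using Suc deg d by (auto simp: degree_0[symmetric])
  then have deg_pow: "degree (iter_num d p q n ^ d) = degree p * k"
    using Suc by (simp add: degree_power_eq k_def)
  have "(degree q + 1) * k \<le> degree p * k" using deg by (intro mult_le_mono1) simp
  with \<open>k \<ge> 2\<close> have "degree (tvar * q ^ k) < degree (iter_num d p q n ^ d)"
    unfolding deg_pow degree_tvar_mult_power[OF q] by (simp add: algebra_simps)
  then show ?case using deg_pow by (simp add: degree_add_eq_left k_def)
qed simp

lemma degree_iter_num_no_pole:
  fixes p q :: "'a::field poly"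
  assumes q: "q \<noteq> 0" and deg: "degree p \<le> degree q" and d: "d \<ge> 2"
  shows "degree (iter_num d p q (Suc n)) = (degree q * d + 1) * d ^ n"
proof (induction n)
  case 0
  have "degree (p ^ d) \<le> d * degree q"
    using degree_power_le[of p d] deg by (metis le_trans mult_le_mono2 mult.commute)
  then have "degree (p ^ d) < degree (tvar * q ^ d ^ Suc 0)"
    unfolding degree_tvar_mult_power[OF q] by simp
  then show ?case using degree_tvar_mult_power[OF q] by (simp add: degree_add_eq_right)
next
  case (Suc n)
  define P where "P = iter_num d p q (Suc n)"
  define k where "k = d ^ Suc n"
  have "k \<ge> 2" unfolding k_def using two_le_power[OF d, of "Suc n"] by simp
  have "P \<noteq> 0" using Suc d by (auto simp: P_def degree_0[symmetric])
  then have deg_pow: "degree (P ^ d) = degree q * d * k + k"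
    using Suc by (simp add: degree_power_eq algebra_simps P_def k_def)
  have "degree (tvar * q ^ (d * k)) < degree (P ^ d)"
    unfolding deg_pow degree_tvar_mult_power[OF q] using \<open>k \<ge> 2\<close> by simp
  then have "degree (P ^ d + tvar * q ^ (d * k)) = degree q * d * k + k"
    using deg_pow by (simp add: degree_add_eq_left)
  then show ?case by (simp add: P_def k_def algebra_simps)
qed

locale reduced_fraction =
  fixes p q :: "'a::field poly" and d :: nat
  assumes alg_closed: "alg_closed TYPE('a)"
    and den_nonzero: "q \<noteq> 0" and den_monic: "lead_coeff q = 1"
    and coprime: "coprime p q" and exponent: "d \<ge> 2"
begin

lemma num_nonzero_at_pole: "poly q c = 0 \<Longrightarrow> poly p c \<noteq> 0"
  using coprime_imp_no_common_root[of q p c] coprime by (auto simp: coprime_commute)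

lemma rnum_rden_f_map_iter:
  "rnum ((f_map d ^^ n) (Fract p q)) = iter_num d p q n \<and> rden ((f_map d ^^ n) (Fract p q)) = q ^ d ^ n"
proof (rule rnum_rden_unique[OF alg_closed _ _ _ f_map_iter_Fract[OF den_nonzero]])
  show "q ^ d ^ n \<noteq> 0" "lead_coeff (q ^ d ^ n) = 1"
    using den_nonzero den_monic by (simp_all add: lead_coeff_power)
  show "coprime (iter_num d p q n) (q ^ d ^ n)"
  proof (rule coprime_if_no_common_root[OF alg_closed])
    fix c assume "poly (q ^ d ^ n) c = 0"
    then have "poly q c = 0" by simp
    with num_nonzero_at_pole exponent show "poly (iter_num d p q n) c \<noteq> 0"
      by (intro poly_iter_num_neq_0) auto
  qed (use den_nonzero in simp)
qed

lemma ht_f_map_iter: "ht ((f_map d ^^ n) (Fract p q)) = max (degree (iter_num d p q n)) (degree q * d ^ n)"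
  using rnum_rden_f_map_iter den_nonzero by (simp add: ht_def degree_power_eq mult.commute)

lemma canon_ht_pole:
  assumes "degree q < degree p"
  shows "canon_ht d (Fract p q) = degree p"
proof -
  have "ht ((f_map d ^^ n) (Fract p q)) = degree p * d ^ n" for n
    using assms unfolding ht_f_map_iter degree_iter_num_pole[OF den_nonzero assms exponent] by simp
  then show ?thesis using exponent by (simp add: canon_ht_def)
qed

text \<open>Only the first iterate is exceptional, so the limit is read off from \<open>n \<ge> 1\<close>.\<close>
lemma canon_ht_no_pole:
  assumes "degree p \<le> degree q"
  shows "canon_ht d (Fract p q) = degree q + 1 / d"
proof -
  define X where "X n = real (ht ((f_map d ^^ n) (Fract p q))) / real d ^ n" for n
  have "X (Suc n) = degree q + 1 / d" for n
  proof -
    have ht: "ht ((f_map d ^^ Suc n) (Fract p q)) = (degree q * d + 1) * d ^ n"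
      unfolding ht_f_map_iter degree_iter_num_no_pole[OF den_nonzero assms exponent] by simp
    show ?thesis unfolding X_def ht using exponent by (simp add: field_simps)
  qed
  then have "X \<longlonglongrightarrow> degree q + 1 / d" by (intro LIMSEQ_imp_Suc[of X]) simp
  then show ?thesis unfolding canon_ht_def X_def[symmetric] by (rule limI)
qed

definition iter_diff_num where
  "iter_diff_num (n::nat) = iter_num d p q n - p * q ^ (d ^ n - 1)"

lemma f_map_iter_diff_Fract:
  assumes "n \<ge> 1"
  shows "(f_map d ^^ n) (Fract p q) - Fract p q = Fract (iter_diff_num n) (q ^ d ^ n)"
proof -
  have "d ^ n = Suc (d ^ n - 1)" using two_le_power[OF exponent assms] by simp
  then have qq: "q ^ d ^ n = q * q ^ (d ^ n - 1)" by (metis power_Suc)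
  have "(f_map d ^^ n) (Fract p q) - Fract p q = Fract (q * iter_diff_num n) (q * q ^ d ^ n)"
    using den_nonzero by (simp add: f_map_iter_Fract iter_diff_num_def qq algebra_simps)
  also have "\<dots> = Fract (iter_diff_num n) (q ^ d ^ n)" using den_nonzero by (rule mult_fract_cancel)
  finally show ?thesis .
qed

lemma poly_iter_diff_num_neq_0:
  assumes "n \<ge> 1" "poly q c = 0"
  shows "poly (iter_diff_num n) c \<noteq> 0"
proof -
  have "d ^ n - 1 > 0" using two_le_power[OF exponent assms(1)] by simp
  then have "poly (iter_diff_num n) c = poly (iter_num d p q n) c"
    using assms(2) by (simp add: iter_diff_num_def zero_power)
  with assms(2) num_nonzero_at_pole exponent show ?thesis
    using poly_iter_num_neq_0[of p c q d n] by simp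
qed

lemma degree_iter_diff_num_pole:
  assumes deg: "degree q < degree p" and "n \<ge> 1"
  shows "degree (iter_diff_num n) = degree p * d ^ n"
proof -
  define k where "k = d ^ n - 1"
  have k: "k \<ge> 1" "d ^ n = Suc k" unfolding k_def using two_le_power[OF exponent \<open>n \<ge> 1\<close>] by simp_all
  have "p \<noteq> 0" using deg by auto
  then have "degree (p * q ^ k) = degree p + k * degree q"
    using den_nonzero by (simp add: degree_mult_eq degree_power_eq)
  also have "\<dots> < degree p * d ^ n" using k deg by simp
  finally have "degree (p * q ^ k) < degree (iter_num d p q n)"
    unfolding degree_iter_num_pole[OF den_nonzero deg exponent] .
  then show ?thesis
    unfolding iter_diff_num_def k_def[symmetric] degree_iter_num_pole[OF den_nonzero deg exponent, symmetric]
    using degree_lead_coeff_diff_lower by blast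
qed

lemma degree_iter_diff_num_no_pole:
  assumes deg: "degree p \<le> degree q"
  shows "degree (iter_diff_num (Suc n)) = degree q * d ^ Suc n + d ^ n"
proof -
  define k where "k = d ^ Suc n - 1"
  have k: "d ^ Suc n = Suc k" unfolding k_def using two_le_power[OF exponent, of "Suc n"] by simp
  have "degree (p * q ^ k) \<le> degree q + k * degree q"
    using degree_mult_le[of p "q ^ k"] degree_power_le[of q k] deg by (simp add: mult.commute)
  also have "\<dots> = degree q * d ^ Suc n" unfolding k by simp
  also have "\<dots> < degree (iter_num d p q (Suc n))"
    unfolding degree_iter_num_no_pole[OF den_nonzero deg exponent] using exponent by (simp add: algebra_simps)
  finally have "degree (iter_diff_num (Suc n)) = degree (iter_num d p q (Suc n))"
    unfolding iter_diff_num_def k_def[symmetric] using degree_lead_coeff_diff_lower by blast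
  then show ?thesis
    unfolding degree_iter_num_no_pole[OF den_nonzero deg exponent] by (simp add: algebra_simps)
qed

lemma iter_diff_num_nonzero:
  assumes "n \<ge> 1"
  shows "iter_diff_num n \<noteq> 0"
proof
  assume "iter_diff_num n = 0"
  then have "degree (iter_diff_num n) = 0" by simp
  moreover obtain m where "n = Suc m" using assms by (cases n) auto
  ultimately show False
    using degree_iter_diff_num_pole[OF _ assms] degree_iter_diff_num_no_pole[of m] exponent
    by (cases "degree q < degree p") auto
qed

lemma prod_f_map_iter_diff_Fract:
  assumes "finite S" "\<And>n. n \<in> S \<Longrightarrow> n \<ge> 1"
  shows "(\<Prod>n\<in>S. (f_map d ^^ n) (Fract p q) - Fract p q)
       = Fract (\<Prod>n\<in>S. iter_diff_num n) (q ^ (\<Sum>n\<in>S. d ^ n))"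
  using assms by (induction S rule: finite_induct) (simp_all add: f_map_iter_diff_Fract fract_collapse power_add)

abbreviation prod_plus :: "nat \<Rightarrow> 'a poly" where
  "prod_plus N \<equiv> \<Prod>n\<in>mu_plus N. iter_diff_num n"

abbreviation prod_minus :: "nat \<Rightarrow> 'a poly" where
  "prod_minus N \<equiv> \<Prod>n\<in>mu_minus N. iter_diff_num n"

lemma prod_plus_minus_nonzero_at_pole:
  assumes "N > 0" "poly q c = 0"
  shows "poly (prod_plus N) c \<noteq> 0" "poly (prod_minus N) c \<noteq> 0"
  using assms poly_iter_diff_num_neq_0 by (auto simp: poly_prod intro: Nat.gr0I)

lemma dyn_eval_mult_Fract:
  assumes N: "N > 0"
  shows "dyn_eval d N (Fract p q) * Fract (prod_minus N) 1 = Fract (prod_plus N) (q ^ nat (Ddeg d N))"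
proof -
  define e_plus e_minus where "e_plus = (\<Sum>n\<in>mu_plus N. d ^ n)" and "e_minus = (\<Sum>n\<in>mu_minus N. d ^ n)"
  have pos: "n \<ge> 1" if "n dvd N" for n using that N by (auto intro: Nat.gr0I)
  have "Ddeg d N = int e_plus - int e_minus"
    using sum_moebius_eq_diff[OF N, of "\<lambda>n. int d ^ n"] by (simp add: Ddeg_def e_plus_def e_minus_def)
  with Ddeg_pos[OF exponent N] have e_plus: "e_plus = e_minus + nat (Ddeg d N)" by linarith
  have "(\<Prod>n\<in>mu_plus N. (f_map d ^^ n) (Fract p q) - Fract p q) = Fract (prod_plus N) (q ^ e_plus)"
    "(\<Prod>n\<in>mu_minus N. (f_map d ^^ n) (Fract p q) - Fract p q) = Fract (prod_minus N) (q ^ e_minus)"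
    unfolding e_plus_def e_minus_def using N by (auto intro!: prod_f_map_iter_diff_Fract pos)
  with dyn_eval_mult_prod_mu_minus[OF exponent N, of "Fract p q"]
  have "dyn_eval d N (Fract p q) * Fract (prod_minus N) (q ^ e_minus) = Fract (prod_plus N) (q ^ e_plus)"
    by simp
  moreover have "Fract (prod_minus N) (q ^ e_minus) = Fract (prod_minus N) 1 * Fract 1 (q ^ e_minus)"
    "Fract (prod_plus N) (q ^ e_plus) = Fract (prod_plus N) (q ^ nat (Ddeg d N)) * Fract 1 (q ^ e_minus)"
    by (simp_all add: e_plus power_add mult.commute)
  ultimately have eq: "dyn_eval d N (Fract p q) * Fract (prod_minus N) 1 * Fract 1 (q ^ e_minus)
      = Fract (prod_plus N) (q ^ nat (Ddeg d N)) * Fract 1 (q ^ e_minus)"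
    by (simp only: mult.assoc)
  have nz: "Fract 1 (q ^ e_minus) \<noteq> 0"
    using den_nonzero eq_fract(1)[of "q ^ e_minus" 1 1 0] by (simp add: fract_collapse)
  from eq show ?thesis unfolding mult_right_cancel[OF nz] .
qed

text \<open>
  Comparing with the representation of \<open>\<Phi>\<^sub>N(p / q, t)\<close> over a power of \<open>q\<close>: the roots of \<open>q\<close>
  are not roots of \<open>prod_minus N\<close>, so it must divide \<open>prod_plus N\<close>.
\<close>
lemma prod_minus_dvd_prod_plus:
  assumes N: "N > 0"
  shows "prod_minus N dvd prod_plus N"
proof -
  define E where "E = degree (dynatomic d N :: 'a poly poly)"
  have "\<exists>W. poly (fract_poly (dynatomic d N)) (Fract p q) = Fract W (q ^ E)"
    unfolding E_def by (rule poly_fract_poly_Fract[OF den_nonzero]) simp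
  then obtain W where W: "dyn_eval d N (Fract p q) = Fract W (q ^ E)"
    by (auto simp: dyn_eval_eq_poly)
  have "Fract (W * prod_minus N) (q ^ E) = Fract (prod_plus N) (q ^ nat (Ddeg d N))"
    using dyn_eval_mult_Fract[OF N] by (simp add: W)
  then have "prod_plus N * q ^ E = prod_minus N * (W * q ^ nat (Ddeg d N))"
    using den_nonzero by (simp add: eq_fract ac_simps)
  then have "prod_minus N dvd prod_plus N * q ^ E" by (rule dvdI)
  moreover have "coprime (prod_minus N) (q ^ E)"
    using den_nonzero prod_plus_minus_nonzero_at_pole[OF N]
    by (intro coprime_if_no_common_root[OF alg_closed]) auto
  ultimately show ?thesis by (rule coprime_dvd_mult_cancel[OF alg_closed, rotated])
qed

lemma rnum_rden_dyn_eval: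
  assumes N: "N > 0"
  shows "rnum (dyn_eval d N (Fract p q)) = prod_plus N div prod_minus N
       \<and> rden (dyn_eval d N (Fract p q)) = q ^ nat (Ddeg d N)"
proof (rule rnum_rden_unique[OF alg_closed])
  define W where "W = prod_plus N div prod_minus N"
  have W: "prod_plus N = W * prod_minus N"
    unfolding W_def using prod_minus_dvd_prod_plus[OF N] by simp
  have nz: "prod_minus N \<noteq> 0" using N iter_diff_num_nonzero by (auto intro: Nat.gr0I)
  have eq: "dyn_eval d N (Fract p q) * Fract (prod_minus N) 1 = Fract W (q ^ nat (Ddeg d N)) * Fract (prod_minus N) 1"
    unfolding dyn_eval_mult_Fract[OF N] W by simp
  have V: "Fract (prod_minus N) 1 \<noteq> 0" using nz eq_fract(1)[of 1 1 "prod_minus N" 0] by (simp add: fract_collapse)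
  from eq show "dyn_eval d N (Fract p q) = Fract W (q ^ nat (Ddeg d N))"
    unfolding mult_right_cancel[OF V] .
  show "q ^ nat (Ddeg d N) \<noteq> 0" "lead_coeff (q ^ nat (Ddeg d N)) = 1"
    using den_nonzero den_monic by (simp_all add: lead_coeff_power)
  show "coprime W (q ^ nat (Ddeg d N))"
  proof (rule coprime_if_no_common_root[OF alg_closed])
    fix c assume "poly (q ^ nat (Ddeg d N)) c = 0"
    then have "poly (prod_plus N) c \<noteq> 0" using prod_plus_minus_nonzero_at_pole[OF N] by simp
    then show "poly W c \<noteq> 0" unfolding W by simp
  qed (use den_nonzero in simp)
qed

lemma degree_rnum_dyn_eval:
  assumes N: "N > 0"
  shows "int (degree (rnum (dyn_eval d N (Fract p q))))
       = (\<Sum>n | n dvd N. moebius (N div n) * int (degree (iter_diff_num n)))"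
proof -
  define W where "W = prod_plus N div prod_minus N"
  have nz: "iter_diff_num n \<noteq> 0" if "n dvd N" for n
    using that N iter_diff_num_nonzero by (auto intro: Nat.gr0I)
  then have "prod_plus N \<noteq> 0" "prod_minus N \<noteq> 0" using N by auto
  moreover have "prod_plus N = W * prod_minus N"
    unfolding W_def using prod_minus_dvd_prod_plus[OF N] by simp
  ultimately have "degree (prod_plus N) = degree W + degree (prod_minus N)"
    by (simp add: degree_mult_eq)
  moreover have "degree (prod_plus N) = (\<Sum>n\<in>mu_plus N. degree (iter_diff_num n))"
    "degree (prod_minus N) = (\<Sum>n\<in>mu_minus N. degree (iter_diff_num n))"
    using nz by (simp_all add: degree_prod_eq_sum_degree)
  ultimately have "int (degree W) = (\<Sum>n\<in>mu_plus N. int (degree (iter_diff_num n)))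
      - (\<Sum>n\<in>mu_minus N. int (degree (iter_diff_num n)))"
    by (simp flip: of_nat_sum)
  also have "\<dots> = (\<Sum>n | n dvd N. moebius (N div n) * int (degree (iter_diff_num n)))"
    using sum_moebius_eq_diff[OF N, of "\<lambda>n. int (degree (iter_diff_num n))"] by simp
  finally show ?thesis using rnum_rden_dyn_eval[OF N] by (simp add: W_def)
qed

lemma degree_rnum_dyn_eval_pole:
  assumes N: "N > 0" and deg: "degree q < degree p"
  shows "int (degree (rnum (dyn_eval d N (Fract p q)))) = Ddeg d N * degree p"
proof -
  have "(\<Sum>n | n dvd N. moebius (N div n) * int (degree (iter_diff_num n)))
      = (\<Sum>n | n dvd N. int (degree p) * (moebius (N div n) * int d ^ n))"
    using N by (intro sum.cong) (auto simp: degree_iter_diff_num_pole[OF deg] intro: Nat.gr0I)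
  then show ?thesis by (simp add: degree_rnum_dyn_eval[OF N] Ddeg_def sum_distrib_left mult.commute)
qed

lemma degree_rnum_dyn_eval_no_pole:
  assumes N: "N > 0" and deg: "degree p \<le> degree q"
  shows "int (degree (rnum (dyn_eval d N (Fract p q)))) = Ddeg d N * degree q + Ddeg_quot d N"
proof -
  have "moebius (N div n) * int (degree (iter_diff_num n))
      = int (degree q) * (moebius (N div n) * int d ^ n) + moebius (N div n) * int d ^ (n - 1)"
    if n: "n \<in> {n. n dvd N}" for n
  proof -
    obtain m where "n = Suc m" using n N by (cases n) auto
    then show ?thesis by (simp add: degree_iter_diff_num_no_pole[OF deg] algebra_simps)
  qed
  then have "(\<Sum>n | n dvd N. moebius (N div n) * int (degree (iter_diff_num n)))
      = (\<Sum>n | n dvd N. int (degree q) * (moebius (N div n) * int d ^ n) + moebius (N div n) * int d ^ (n - 1))"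
    by (rule sum.cong[OF refl])
  then show ?thesis
    by (simp add: degree_rnum_dyn_eval[OF N] Ddeg_def Ddeg_quot_def sum.distrib sum_distrib_left mult.commute)
qed

theorem dyn_eval_height_valuations:
  assumes N: "N > 0"
  defines "g \<equiv> dyn_eval d N (Fract p q)"
  shows "g \<noteq> 0 \<and> v_inf g < 0 \<and> real (ht g) = real_of_int (Ddeg d N) * canon_ht d (Fract p q)
       \<and> real_of_int (\<Sum>c \<in> {c. v_fin c g > 0}. v_fin c g) = real_of_int (Ddeg d N) * canon_ht d (Fract p q)"
proof -
  define D where "D = Ddeg d N"
  have D: "D > 0" "Ddeg_quot d N > 0" using Ddeg_pos Ddeg_quot_pos exponent N by (auto simp: D_def)
  have rden: "int (degree (rden g)) = D * degree q"
    using rnum_rden_dyn_eval[OF N] den_nonzero D(1) by (simp add: g_def D_def degree_power_eq)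
  have "int (degree (rden g)) < int (degree (rnum g)) \<and> real (degree (rnum g)) = D * canon_ht d (Fract p q)"
  proof (cases "degree q < degree p")
    case True
    then have W: "int (degree (rnum g)) = D * degree p"
      unfolding g_def D_def by (rule degree_rnum_dyn_eval_pole[OF N])
    have "D * int (degree q) < D * int (degree p)" using True D(1) by simp
    moreover have "real (degree (rnum g)) = real_of_int D * real (degree p)"
      using arg_cong[OF W, of real_of_int] by simp
    ultimately show ?thesis using W rden canon_ht_pole[OF True] by simp
  next
    case False
    then have W: "int (degree (rnum g)) = D * degree q + Ddeg_quot d N"
      unfolding g_def D_def by (intro degree_rnum_dyn_eval_no_pole[OF N]) simp
    have D_eq: "D = d * Ddeg_quot d N" unfolding D_def by (rule Ddeg_eq_mult_Ddeg_quot[OF N])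
    have "real (degree (rnum g)) = real_of_int D * real (degree q) + real_of_int (Ddeg_quot d N)"
      using arg_cong[OF W, of real_of_int] by simp
    also have "\<dots> = real_of_int D * (real (degree q) + 1 / real d)"
      using exponent by (simp add: D_eq distrib_left)
    finally show ?thesis using W rden D(2) canon_ht_no_pole False by simp
  qed
  then have "degree (rden g) < degree (rnum g)" "real (degree (rnum g)) = D * canon_ht d (Fract p q)"
    by simp_all
  with pole_at_infinity_valuations[OF alg_closed, of g] show ?thesis unfolding D_def by simp
qed

end

theorem lemma2p3:
  fixes d N :: nat and \<alpha> :: "'a::field_char_0 ratfun"
  assumes "alg_closed TYPE('a)"
    and "d \<ge> 2" and "N \<ge> 1"
  shows "dyn_eval d N \<alpha> \<noteq> 0 \<and> v_inf (dyn_eval d N \<alpha>) < 0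
       \<and> real (ht (dyn_eval d N \<alpha>)) = real_of_int (Ddeg d N) * canon_ht d \<alpha>
       \<and> real_of_int (\<Sum>c \<in> {c. v_fin c (dyn_eval d N \<alpha>) > 0}. v_fin c (dyn_eval d N \<alpha>))
           = real_of_int (Ddeg d N) * canon_ht d \<alpha>"
proof -
  have \<alpha>: "rden \<alpha> \<noteq> 0" "lead_coeff (rden \<alpha>) = 1" "coprime (rnum \<alpha>) (rden \<alpha>)"
    and \<alpha>_eq: "\<alpha> = Fract (rnum \<alpha>) (rden \<alpha>)"
    using rnum_rden[OF assms(1)] by blast+
  interpret reduced_fraction "rnum \<alpha>" "rden \<alpha>" d
    using \<alpha> assms(1,2) by unfold_locales
  from dyn_eval_height_valuations[of N] assms(3) show ?thesis
    unfolding \<alpha>_eq[symmetric] by simp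
qed

end
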